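(* Let $(\Omega,\mathcal{F},(\mathcal{F}_t)_{t\in[0,T]},P)$ be a filtered probability space, $T>0$, and let $(X_t)_{t\in[0,T]}$ be a nonnegative continuous sub-martingale whose initial value $X_0$ is a deterministic constant. Let $M_t=\max_{0\le s\le t}X_s$. Let $p>0$ and suppose that $E\left(\int_0^T M_t^{2p}\,d[X,X]_t\right)<\infty$. Then $$E\left(X_T M_T^{p}\right)\ge\frac{p}{p+1}E\left(M_T^{p+1}\right)+\frac{1}{p+1}X_0^{p+1}.$$
   Context: $[X,X]_t$ denotes the quadratic variation of $X$. $M_t$ is the running maximum of $X$. *)

theory Defs
  imports "HOL-Probability.Probability"
begin

definition filtration_on :: "'a measure \<Rightarrow> real \<Rightarrow> (real \<Rightarrow> 'a measure) \<Rightarrow> bool" where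
  "filtration_on M T F \<longleftrightarrow>
     (\<forall>t\<in>{0..T}. subalgebra M (F t)) \<and>
     (\<forall>s\<in>{0..T}. \<forall>t\<in>{0..T}. s \<le> t \<longrightarrow> sets (F s) \<subseteq> sets (F t))"

definition submartingale_on ::
    "'a measure \<Rightarrow> real \<Rightarrow> (real \<Rightarrow> 'a measure) \<Rightarrow> (real \<Rightarrow> 'a \<Rightarrow> real) \<Rightarrow> bool" where
  "submartingale_on M T F X \<longleftrightarrow>
     filtration_on M T F \<and>
     (\<forall>t\<in>{0..T}. X t \<in> borel_measurable (F t)) \<and>
     (\<forall>t\<in>{0..T}. integrable M (X t)) \<and>
     (\<forall>s\<in>{0..T}. \<forall>t\<in>{0..T}. s \<le> t \<longrightarrow>
        (AE \<omega> in M. X s \<omega> \<le> real_cond_exp M (F s) (X t) \<omega>))"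

definition partition_of :: "real \<Rightarrow> real list \<Rightarrow> bool" where
  "partition_of t ps \<longleftrightarrow> ps \<noteq> [] \<and> sorted_wrt (<) ps \<and> hd ps = 0 \<and> last ps = t"

definition mesh :: "real list \<Rightarrow> real" where
  "mesh ps = Max (insert 0 {ps ! (Suc i) - ps ! i | i. Suc i < length ps})"

definition sq_incr_sum :: "(real \<Rightarrow> 'a \<Rightarrow> real) \<Rightarrow> real list \<Rightarrow> 'a \<Rightarrow> real" where
  "sq_incr_sum X ps \<omega> = (\<Sum>i<length ps - 1. (X (ps ! Suc i) \<omega> - X (ps ! i) \<omega>)\<^sup>2)"

definition converges_in_prob :: "'a measure \<Rightarrow> (nat \<Rightarrow> 'a \<Rightarrow> real) \<Rightarrow> ('a \<Rightarrow> real) \<Rightarrow> bool" where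
  "converges_in_prob M Y Z \<longleftrightarrow>
     (\<forall>\<epsilon>>0. (\<lambda>n. measure M {\<omega>\<in>space M. \<bar>Y n \<omega> - Z \<omega>\<bar> > \<epsilon>}) \<longlonglongrightarrow> 0)"

definition quadratic_variation_on ::
    "'a measure \<Rightarrow> real \<Rightarrow> (real \<Rightarrow> 'a \<Rightarrow> real) \<Rightarrow> (real \<Rightarrow> 'a \<Rightarrow> real) \<Rightarrow> bool" where
  "quadratic_variation_on M T X Q \<longleftrightarrow>
     (\<forall>\<omega>\<in>space M. continuous_on {0..T} (\<lambda>t. Q t \<omega>) \<and> mono_on {0..T} (\<lambda>t. Q t \<omega>)) \<and>
     (\<forall>t\<in>{0..T}. \<forall>P :: nat \<Rightarrow> real list.
        (\<forall>n. partition_of t (P n)) \<longrightarrow> (\<lambda>n. mesh (P n)) \<longlonglongrightarrow> 0 \<longrightarrow>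
        converges_in_prob M (\<lambda>n. sq_incr_sum X (P n)) (Q t))"

definition running_max :: "(real \<Rightarrow> 'a \<Rightarrow> real) \<Rightarrow> real \<Rightarrow> 'a \<Rightarrow> real" where
  "running_max X t \<omega> = Sup ((\<lambda>s. X s \<omega>) ` {0..t})"

text \<open>Pathwise Lebesgue--Stieltjes integral over [0,T] of a nonnegative function w.r.t.
  the nondecreasing continuous path t \<mapsto> Q t \<omega> (extended constantly outside [0,T]).\<close>
definition stieltjes_nn_integral ::
    "real \<Rightarrow> (real \<Rightarrow> real) \<Rightarrow> (real \<Rightarrow> real) \<Rightarrow> ennreal" where
  "stieltjes_nn_integral T q f =
     (\<integral>\<^sup>+ s. indicator {0..T} s * ennreal (f s) \<partial>interval_measure (\<lambda>s. q (max 0 (min T s))))"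

end

theory Submission
  imports Defs
begin

text \<open>Sample X on a grid 0 = t_0 \<le> ... \<le> t_N = T, let m_k be the maximum of
  X(t_0), ..., X(t_k) truncated at a level K, and consider D_k = X(t_k) m_k^p - p/(p+1) m_k^(p+1).
  Pathwise D_(k+1) \<ge> D_k + (X(t_(k+1)) - X(t_k)) m_k^p: if the truncated maximum moves, it moves
  up towards X(t_(k+1)), and by Young's inequality y m^p - p/(p+1) m^(p+1) is increasing in
  m \<le> y. Since m_k^p is bounded and adapted, the submartingale property gives the increments
  nonnegative expectation, so E D_N \<ge> D_0 = x0^(p+1)/(p+1). Refining the grid and raising the
  truncation level, m_N tends to M_T by continuity of the paths, and Fatou's lemma gives the
  claim. The truncation keeps every expectation finite.\<close>

fun prefix_max :: "(nat \<Rightarrow> real) \<Rightarrow> nat \<Rightarrow> real" where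
  "prefix_max y 0 = y 0"
| "prefix_max y (Suc k) = max (prefix_max y k) (y (Suc k))"

lemma prefix_max_ge: "j \<le> k \<Longrightarrow> y j \<le> prefix_max y k"
  by (induction k) (auto simp: le_Suc_eq max_def)

lemma prefix_max_le: "(\<And>j. j \<le> k \<Longrightarrow> y j \<le> B) \<Longrightarrow> prefix_max y k \<le> B"
  by (induction k) auto

lemma prefix_max_nonneg: "0 \<le> y 0 \<Longrightarrow> 0 \<le> prefix_max y k"
  using prefix_max_ge[of 0 k y] by simp

lemma prefix_max_measurable:
  "(\<And>j. j \<le> k \<Longrightarrow> f j \<in> borel_measurable M) \<Longrightarrow> (\<lambda>\<omega>. prefix_max (\<lambda>j. f j \<omega>) k) \<in> borel_measurable M"
  by (induction k) auto

lemma young_powr: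
  fixes a b p :: real
  assumes "0 \<le> a" "0 \<le> b" "p > 0"
  shows "a * b powr p \<le> a powr (p + 1) / (p + 1) + p / (p + 1) * b powr (p + 1)"
proof -
  have "a * b powr p \<le> a powr (p + 1) / (p + 1) + (b powr p) powr ((p + 1) / p) / ((p + 1) / p)"
    using assms by (intro Youngs_inequality) (auto simp: field_simps)
  also have "(b powr p) powr ((p + 1) / p) = b powr (p + 1)"
    using assms by (simp add: powr_powr)
  finally show ?thesis by (simp add: mult.commute)
qed

definition doob_potential :: "real \<Rightarrow> real \<Rightarrow> real \<Rightarrow> real" where
  "doob_potential p y m = y * m powr p - p / (p + 1) * m powr (p + 1)"

lemma doob_potential_diag:
  assumes "0 \<le> x" "p \<noteq> -1"
  shows "doob_potential p x x = x powr (p + 1) / (p + 1)"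
proof -
  have "x * x powr p = x powr (p + 1)"
    using assms by (cases "x = 0") (auto simp: powr_add)
  moreover have "p + 1 \<noteq> 0" using assms(2) by linarith
  ultimately show ?thesis
    unfolding doob_potential_def by (simp add: field_simps)
qed

lemma doob_potential_mono:
  assumes "0 \<le> m" "m \<le> m'" "m' \<le> y" "p > 0"
  shows "doob_potential p y m \<le> doob_potential p y m'"
proof -
  have "m powr p \<le> m' powr p" using assms by (intro powr_mono2) auto
  then have "m' * (m' powr p - m powr p) \<le> y * (m' powr p - m powr p)"
    using assms by (intro mult_right_mono) auto
  moreover have "m' * m' powr p = m' powr (p + 1)"
    using assms by (cases "m' = 0") (auto simp: powr_add)
  moreover have "m' powr (p + 1) = m' powr (p + 1) / (p + 1) + p / (p + 1) * m' powr (p + 1)"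
    using assms by (simp add: add_divide_distrib[symmetric] divide_simps) (simp add: algebra_simps)
  ultimately show ?thesis
    using young_powr[of m' m p] assms unfolding doob_potential_def by (simp add: algebra_simps)
qed

lemma doob_potential_truncated_max_step:
  assumes "0 \<le> y 0" "0 \<le> K" "p > 0"
  shows "doob_potential p (y k) (min (prefix_max y k) K)
           + (y (Suc k) - y k) * min (prefix_max y k) K powr p
         \<le> doob_potential p (y (Suc k)) (min (prefix_max y (Suc k)) K)"
proof -
  let ?m = "min (prefix_max y k) K" and ?m' = "min (prefix_max y (Suc k)) K"
  have "0 \<le> ?m" using prefix_max_nonneg[of y k] assms by simp
  moreover have "?m' = ?m \<or> ?m \<le> ?m' \<and> ?m' \<le> y (Suc k)"
    by (auto simp: min_def max_def)
  ultimately have "doob_potential p (y (Suc k)) ?m \<le> doob_potential p (y (Suc k)) ?m'"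
    using doob_potential_mono assms(3) by auto
  then show ?thesis unfolding doob_potential_def by (simp add: algebra_simps)
qed

lemma doob_potential_truncated_max_telescope:
  assumes "0 \<le> y 0" "0 \<le> K" "p > 0"
  shows "doob_potential p (y 0) (min (y 0) K)
           + (\<Sum>k<N. (y (Suc k) - y k) * min (prefix_max y k) K powr p)
         \<le> doob_potential p (y N) (min (prefix_max y N) K)"
proof (induction N)
  case (Suc N)
  then show ?case
    using doob_potential_truncated_max_step[of y K p N] assms by simp
qed simp

definition grid :: "real \<Rightarrow> nat \<Rightarrow> nat \<Rightarrow> real" where
  "grid T N k = real k * T / real N"

lemma grid_0 [simp]: "grid T N 0 = 0"
  by (simp add: grid_def)

lemma grid_last [simp]: "0 < N \<Longrightarrow> grid T N N = T"
  by (simp add: grid_def)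

lemma mono_grid: "0 \<le> T \<Longrightarrow> mono (grid T N)"
  by (auto intro!: monoI divide_right_mono mult_right_mono simp: grid_def)

lemma grid_in_interval:
  assumes "0 \<le> T" "k \<le> N"
  shows "grid T N k \<in> {0..T}"
proof (cases "N = 0")
  case False
  have "real k * T \<le> real N * T" using assms by (intro mult_right_mono) auto
  then show ?thesis using assms False by (simp add: grid_def field_simps)
qed (simp add: grid_def assms)

lemma grid_approx:
  assumes "0 < T" "s \<in> {0..T}" "0 < N"
  obtains k where "k \<le> N" "s - T / real N \<le> grid T N k" "grid T N k \<le> s"
proof -
  define k where "k = nat \<lfloor>s * real N / T\<rfloor>"
  have "0 \<le> s * real N / T" using assms by simp
  then have k: "real k \<le> s * real N / T" "s * real N / T < real k + 1"
    unfolding k_def by linarith+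
  have "s * real N / T \<le> real N" using assms by (simp add: field_simps)
  with k(1) have "k \<le> N" by linarith
  moreover have "s - T / real N \<le> grid T N k"
  proof -
    have "s * real N - T \<le> real k * T" using k(2) assms by (simp add: field_simps)
    then have "(s * real N - T) / real N \<le> grid T N k"
      unfolding grid_def by (intro divide_right_mono) auto
    then show ?thesis using assms by (simp add: field_simps)
  qed
  moreover have "grid T N k \<le> s"
    using k(1) assms by (simp add: grid_def field_simps)
  ultimately show ?thesis by (rule that)
qed

lemma prefix_max_grid_tendsto_Sup:
  fixes f :: "real \<Rightarrow> real"
  assumes cont: "continuous_on {0..T} f" and "0 < T"
  shows "(\<lambda>n. prefix_max (\<lambda>k. f (grid T (Suc n) k)) (Suc n)) \<longlonglongrightarrow> Sup (f ` {0..T})"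
proof -
  obtain s where s: "s \<in> {0..T}" "\<And>r. r \<in> {0..T} \<Longrightarrow> f r \<le> f s"
    using continuous_attains_sup[OF compact_Icc _ cont] \<open>0 < T\<close> by auto
  then have Sup: "Sup (f ` {0..T}) = f s"
    by (intro cSup_eq_maximum) auto
  have "\<forall>n. \<exists>k. k \<le> Suc n \<and> s - T / real (Suc n) \<le> grid T (Suc n) k \<and> grid T (Suc n) k \<le> s"
    by (metis grid_approx[OF \<open>0 < T\<close> s(1)] zero_less_Suc)
  then obtain k where k: "\<And>n. k n \<le> Suc n"
    "\<And>n. s - T / real (Suc n) \<le> grid T (Suc n) (k n)" "\<And>n. grid T (Suc n) (k n) \<le> s"
    by (auto dest!: choice)
  have "(\<lambda>n. s - T / real (Suc n)) \<longlonglongrightarrow> s"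
    using tendsto_diff[OF tendsto_const LIMSEQ_Suc[OF lim_const_over_n], of s T] by simp
  then have "(\<lambda>n. grid T (Suc n) (k n)) \<longlonglongrightarrow> s"
    by (rule tendsto_sandwich[rotated 2, OF _ tendsto_const]) (blast intro: always_eventually k(2,3))+
  moreover have "eventually (\<lambda>n. grid T (Suc n) (k n) \<in> {0..T}) sequentially"
    using \<open>0 < T\<close> k(1) by (intro always_eventually allI grid_in_interval) auto
  ultimately have lim: "(\<lambda>n. f (grid T (Suc n) (k n))) \<longlonglongrightarrow> f s"
    by (rule continuous_on_tendsto_compose[OF cont _ s(1)])
  have "f (grid T (Suc n) (k n)) \<le> prefix_max (\<lambda>k. f (grid T (Suc n) k)) (Suc n)" for n
    by (rule prefix_max_ge[OF k(1), of "\<lambda>j. f (grid T (Suc n) j)"])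
  moreover have "prefix_max (\<lambda>k. f (grid T (Suc n) k)) (Suc n) \<le> f s" for n
    using \<open>0 < T\<close> by (intro prefix_max_le s(2) grid_in_interval) auto
  ultimately show ?thesis
    unfolding Sup by (intro tendsto_sandwich[OF _ _ lim tendsto_const] always_eventually allI)
qed

lemma tendsto_min_filterlim_at_top:
  fixes a K :: "'b \<Rightarrow> real"
  assumes "(a \<longlongrightarrow> L) F" "filterlim K at_top F"
  shows "((\<lambda>n. min (a n) (K n)) \<longlongrightarrow> L) F"
proof -
  have "eventually (\<lambda>n. a n < L + 1) F"
    using order_tendstoD(2)[OF assms(1)] by simp
  moreover have "eventually (\<lambda>n. L + 1 \<le> K n) F"
    using assms(2) by (simp add: filterlim_at_top)
  ultimately have "eventually (\<lambda>n. a n = min (a n) (K n)) F"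
    by eventually_elim simp
  then show ?thesis
    using assms(1) by (rule Lim_transform_eventually[rotated])
qed

lemma prefix_max_le_running_max:
  assumes "continuous_on {0..T} (\<lambda>s. X s \<omega>)" "\<And>k. k \<le> N \<Longrightarrow> t k \<in> {0..T}"
  shows "prefix_max (\<lambda>k. X (t k) \<omega>) N \<le> running_max X T \<omega>"
proof -
  have "bdd_above ((\<lambda>s. X s \<omega>) ` {0..T})"
    using assms(1) by (intro bounded_imp_bdd_above compact_imp_bounded compact_continuous_image) auto
  then show ?thesis
    unfolding running_max_def using assms(2) by (intro prefix_max_le cSup_upper) auto
qed

lemma truncated_grid_max_tendsto_running_max:
  assumes "continuous_on {0..T} (\<lambda>s. X s \<omega>)" "0 < T"
  shows "(\<lambda>n. min (prefix_max (\<lambda>k. X (grid T (Suc n) k) \<omega>) (Suc n)) (c + real n))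
           \<longlonglongrightarrow> running_max X T \<omega>"
  unfolding running_max_def using assms
  by (intro tendsto_min_filterlim_at_top prefix_max_grid_tendsto_Sup
      filterlim_tendsto_add_at_top[OF tendsto_const filterlim_real_sequentially])

lemma nn_integral_affine_le_of_tendsto:
  fixes f :: "nat \<Rightarrow> 'a \<Rightarrow> ennreal"
  assumes "\<And>n. f n \<in> borel_measurable M" "\<And>\<omega>. \<omega> \<in> space M \<Longrightarrow> (\<lambda>n. f n \<omega>) \<longlonglongrightarrow> g \<omega>"
    and "c < \<top>" "\<And>n. c * integral\<^sup>N M (f n) + d \<le> A"
  shows "c * integral\<^sup>N M g + d \<le> A"
proof -
  have "integral\<^sup>N M g = (\<integral>\<^sup>+\<omega>. liminf (\<lambda>n. f n \<omega>) \<partial>M)"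
    using assms(2) by (intro nn_integral_cong lim_imp_Liminf[symmetric]) auto
  also have "\<dots> \<le> liminf (\<lambda>n. integral\<^sup>N M (f n))"
    using assms(1) by (rule nn_integral_liminf)
  finally have "c * integral\<^sup>N M g + d \<le> c * liminf (\<lambda>n. integral\<^sup>N M (f n)) + d"
    by (intro add_right_mono mult_left_mono) auto
  also have "\<dots> = liminf (\<lambda>n. c * integral\<^sup>N M (f n) + d)"
  proof (rule Liminf_compose_continuous_mono[symmetric])
    show "continuous_on UNIV (\<lambda>x. c * x + d)"
      using assms(3) by (intro continuous_intros ennreal_continuous_on_cmult)
    show "mono (\<lambda>x. c * x + d)" by (intro monoI add_right_mono mult_left_mono) auto
  qed simp
  also have "\<dots> \<le> A" using assms(4) by (intro Liminf_le) auto
  finally show ?thesis .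
qed

lemma filtration_on_measurable_mono:
  assumes "filtration_on M T F" "s \<in> {0..T}" "t \<in> {0..T}" "s \<le> t" "f \<in> borel_measurable (F s)"
  shows "f \<in> borel_measurable (F t)"
proof -
  have "subalgebra (F t) (F s)"
    using assms(1-4) unfolding filtration_on_def subalgebra_def by auto
  then show ?thesis using assms(5) by (rule measurable_from_subalg)
qed

lemma filtration_on_measurable:
  assumes "filtration_on M T F" "t \<in> {0..T}" "f \<in> borel_measurable (F t)"
  shows "f \<in> borel_measurable M"
  using assms measurable_from_subalg unfolding filtration_on_def by blast

lemma submartingale_on_measurable:
  "submartingale_on M T F X \<Longrightarrow> s \<in> {0..T} \<Longrightarrow> X s \<in> borel_measurable M"
  using filtration_on_measurable unfolding submartingale_on_def by blast

lemma integrable_bounded_mult: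
  fixes g h :: "'a \<Rightarrow> real"
  assumes "integrable M h" "g \<in> borel_measurable M" "\<And>\<omega>. \<omega> \<in> space M \<Longrightarrow> \<bar>g \<omega>\<bar> \<le> B"
  shows "integrable M (\<lambda>\<omega>. g \<omega> * h \<omega>)"
proof (rule Bochner_Integration.integrable_bound)
  show "integrable M (\<lambda>\<omega>. B * h \<omega>)" using assms(1) by simp
  show "AE \<omega> in M. norm (g \<omega> * h \<omega>) \<le> norm (B * h \<omega>)"
  proof (intro AE_I2)
    fix \<omega> assume "\<omega> \<in> space M"
    then have "\<bar>g \<omega>\<bar> \<le> \<bar>B\<bar>" using assms(3) by force
    then show "norm (g \<omega> * h \<omega>) \<le> norm (B * h \<omega>)"
      by (simp add: abs_mult mult_right_mono)
  qed
qed (use assms(1,2) in measurable)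

lemma submartingale_on_integral_mult_mono:
  assumes "prob_space M" and sub: "submartingale_on M T F X"
    and st: "s \<in> {0..T}" "t \<in> {0..T}" "s \<le> t"
    and g: "g \<in> borel_measurable (F s)" "\<And>\<omega>. \<omega> \<in> space M \<Longrightarrow> 0 \<le> g \<omega> \<and> g \<omega> \<le> B"
  shows "(\<integral>\<omega>. g \<omega> * X s \<omega> \<partial>M) \<le> (\<integral>\<omega>. g \<omega> * X t \<omega> \<partial>M)"
proof -
  interpret prob_space M by fact
  have filt: "filtration_on M T F" using sub unfolding submartingale_on_def by blast
  then interpret finite_measure_subalgebra M "F s"
    using st(1) by unfold_locales (simp add: filtration_on_def)
  have gM: "g \<in> borel_measurable M" by (rule filtration_on_measurable[OF filt st(1) g(1)])
  have X: "integrable M (X s)" "integrable M (X t)" "X t \<in> borel_measurable M"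
    using sub st unfolding submartingale_on_def by auto
  have gX: "integrable M (\<lambda>\<omega>. g \<omega> * X r \<omega>)" if "integrable M (X r)" for r
    using that gM g(2) by (intro integrable_bounded_mult[where B = B]) auto
  have ce: "integrable M (\<lambda>\<omega>. g \<omega> * real_cond_exp M (F s) (X t) \<omega>)"
    "(\<integral>\<omega>. g \<omega> * real_cond_exp M (F s) (X t) \<omega> \<partial>M) = (\<integral>\<omega>. g \<omega> * X t \<omega> \<partial>M)"
    using real_cond_exp_intg[OF gX[OF X(2)] g(1) X(3)] by auto
  have "AE \<omega> in M. X s \<omega> \<le> real_cond_exp M (F s) (X t) \<omega>"
    using sub st unfolding submartingale_on_def by auto
  then have "(\<integral>\<omega>. g \<omega> * X s \<omega> \<partial>M) \<le> (\<integral>\<omega>. g \<omega> * real_cond_exp M (F s) (X t) \<omega> \<partial>M)"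
    using g(2) by (intro integral_mono_AE[OF gX[OF X(1)] ce(1)]) (auto intro: mult_left_mono)
  then show ?thesis using ce(2) by simp
qed

lemma submartingale_on_transform_integral_nonneg:
  assumes "prob_space M" and sub: "submartingale_on M T F X"
    and t: "mono t" "\<And>k. k \<le> N \<Longrightarrow> t k \<in> {0..T}"
    and g: "\<And>k. k < N \<Longrightarrow> g k \<in> borel_measurable (F (t k))"
      "\<And>k \<omega>. k < N \<Longrightarrow> \<omega> \<in> space M \<Longrightarrow> 0 \<le> g k \<omega> \<and> g k \<omega> \<le> B"
  shows "integrable M (\<lambda>\<omega>. \<Sum>k<N. (X (t (Suc k)) \<omega> - X (t k) \<omega>) * g k \<omega>)"
    and "0 \<le> (\<integral>\<omega>. (\<Sum>k<N. (X (t (Suc k)) \<omega> - X (t k) \<omega>) * g k \<omega>) \<partial>M)"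
proof -
  have filt: "filtration_on M T F" using sub unfolding submartingale_on_def by blast
  have gX: "integrable M (\<lambda>\<omega>. g k \<omega> * X (t j) \<omega>)" if "k < N" "j \<le> N" for k j
  proof (rule integrable_bounded_mult[where B = B])
    show "integrable M (X (t j))" using sub t(2)[OF that(2)] unfolding submartingale_on_def by blast
    show "g k \<in> borel_measurable M" using filtration_on_measurable[OF filt t(2) g(1)] that by simp
  qed (use g(2) that in force)
  have incr: "integrable M (\<lambda>\<omega>. (X (t (Suc k)) \<omega> - X (t k) \<omega>) * g k \<omega>)"
    "0 \<le> (\<integral>\<omega>. (X (t (Suc k)) \<omega> - X (t k) \<omega>) * g k \<omega> \<partial>M)" if "k < N" for k
  proof -
    have "(\<integral>\<omega>. g k \<omega> * X (t k) \<omega> \<partial>M) \<le> (\<integral>\<omega>. g k \<omega> * X (t (Suc k)) \<omega> \<partial>M)"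
      using that t by (intro submartingale_on_integral_mult_mono[OF assms(1) sub _ _ _ g])
        (auto simp: mono_def)
    moreover have "(\<lambda>\<omega>. (X (t (Suc k)) \<omega> - X (t k) \<omega>) * g k \<omega>)
        = (\<lambda>\<omega>. g k \<omega> * X (t (Suc k)) \<omega> - g k \<omega> * X (t k) \<omega>)"
      by (auto simp: algebra_simps)
    ultimately show "integrable M (\<lambda>\<omega>. (X (t (Suc k)) \<omega> - X (t k) \<omega>) * g k \<omega>)"
      "0 \<le> (\<integral>\<omega>. (X (t (Suc k)) \<omega> - X (t k) \<omega>) * g k \<omega> \<partial>M)"
      using gX[of k k] gX[of k "Suc k"] that by auto
  qed
  show "integrable M (\<lambda>\<omega>. \<Sum>k<N. (X (t (Suc k)) \<omega> - X (t k) \<omega>) * g k \<omega>)"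
    using incr(1) by auto
  show "0 \<le> (\<integral>\<omega>. (\<Sum>k<N. (X (t (Suc k)) \<omega> - X (t k) \<omega>) * g k \<omega>) \<partial>M)"
    using incr by (subst Bochner_Integration.integral_sum) (auto intro!: sum_nonneg)
qed

lemma submartingale_on_sampled_doob:
  assumes "prob_space M" and sub: "submartingale_on M T F X"
    and t: "mono t" "\<And>k. k \<le> N \<Longrightarrow> t k \<in> {0..T}"
    and x0: "\<forall>\<omega>\<in>space M. X (t 0) \<omega> = x0" "0 \<le> x0" "x0 \<le> K" and "p > 0"
  defines "m \<equiv> \<lambda>k \<omega>. min (prefix_max (\<lambda>j. X (t j) \<omega>) k) K"
  shows "integrable M (\<lambda>\<omega>. X (t N) \<omega> * m N \<omega> powr p)"
    and "integrable M (\<lambda>\<omega>. m N \<omega> powr (p + 1))"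
    and "p / (p + 1) * (\<integral>\<omega>. m N \<omega> powr (p + 1) \<partial>M) + x0 powr (p + 1) / (p + 1)
           \<le> (\<integral>\<omega>. X (t N) \<omega> * m N \<omega> powr p \<partial>M)"
proof -
  interpret prob_space M by fact
  have filt: "filtration_on M T F" using sub unfolding submartingale_on_def by blast
  have m_meas: "m k \<in> borel_measurable (F (t k))" if "k \<le> N" for k
  proof -
    have "X (t j) \<in> borel_measurable (F (t k))" if "j \<le> k" for j
    proof (rule filtration_on_measurable_mono[OF filt t(2) t(2) monoD[OF t(1) that]])
      show "X (t j) \<in> borel_measurable (F (t j))"
        using sub t(2) \<open>k \<le> N\<close> that unfolding submartingale_on_def by auto
    qed (use \<open>k \<le> N\<close> that in auto)
    then have "(\<lambda>\<omega>. prefix_max (\<lambda>j. X (t j) \<omega>) k) \<in> borel_measurable (F (t k))"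
      by (rule prefix_max_measurable)
    then show ?thesis unfolding m_def by measurable
  qed
  have m_bounds: "0 \<le> m k \<omega> \<and> m k \<omega> \<le> K" if "\<omega> \<in> space M" for k \<omega>
    using prefix_max_nonneg[of "\<lambda>j. X (t j) \<omega>" k] x0 that unfolding m_def by auto
  then have m_powr_bounds: "0 \<le> m k \<omega> powr q \<and> m k \<omega> powr q \<le> K powr q"
    if "\<omega> \<in> space M" "0 \<le> q" for k \<omega> q
    using that by (auto intro: powr_mono2)
  have mM: "(\<lambda>\<omega>. m N \<omega> powr q) \<in> borel_measurable M" for q
    using filtration_on_measurable[OF filt t(2) m_meas] by measurable
  have XN: "integrable M (X (t N))" using sub t(2) unfolding submartingale_on_def by blast
  show int1: "integrable M (\<lambda>\<omega>. X (t N) \<omega> * m N \<omega> powr p)"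
    using integrable_bounded_mult[OF XN mM, of p "K powr p"] m_powr_bounds[of _ p] \<open>p > 0\<close>
    by (simp add: mult.commute)
  show int2: "integrable M (\<lambda>\<omega>. m N \<omega> powr (p + 1))"
    using m_powr_bounds[of _ "p + 1"] \<open>p > 0\<close>
    by (intro integrable_const_bound[where B = "K powr (p + 1)"] mM) auto
  define S where "S \<omega> = (\<Sum>k<N. (X (t (Suc k)) \<omega> - X (t k) \<omega>) * m k \<omega> powr p)" for \<omega>
  have S: "integrable M S" "0 \<le> (\<integral>\<omega>. S \<omega> \<partial>M)"
    unfolding S_def using m_meas m_powr_bounds[of _ p] \<open>p > 0\<close>
    by (intro submartingale_on_transform_integral_nonneg[OF assms(1) sub t, where B = "K powr p"];
        force simp: powr_gt_zero)+
  have "x0 powr (p + 1) / (p + 1) + S \<omega> \<le> doob_potential p (X (t N) \<omega>) (m N \<omega>)"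
    if "\<omega> \<in> space M" for \<omega>
    using doob_potential_truncated_max_telescope[of "\<lambda>j. X (t j) \<omega>" K p N]
      doob_potential_diag[of x0 p] x0 that \<open>p > 0\<close>
    unfolding S_def m_def by simp
  then have "(\<integral>\<omega>. x0 powr (p + 1) / (p + 1) + S \<omega> \<partial>M)
      \<le> (\<integral>\<omega>. X (t N) \<omega> * m N \<omega> powr p - p / (p + 1) * m N \<omega> powr (p + 1) \<partial>M)"
    using S int1 int2 unfolding doob_potential_def by (intro integral_mono) auto
  then show "p / (p + 1) * (\<integral>\<omega>. m N \<omega> powr (p + 1) \<partial>M) + x0 powr (p + 1) / (p + 1)
      \<le> (\<integral>\<omega>. X (t N) \<omega> * m N \<omega> powr p \<partial>M)"
    using S int1 int2 by (simp add: prob_space)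
qed

lemma submartingale_on_sampled_doob_nn_integral:
  assumes "prob_space M" and sub: "submartingale_on M T F X"
    and X: "\<forall>\<omega>\<in>space M. 0 \<le> X T \<omega>" "\<forall>\<omega>\<in>space M. continuous_on {0..T} (\<lambda>s. X s \<omega>)"
    and t: "mono t" "\<And>k. k \<le> N \<Longrightarrow> t k \<in> {0..T}" "t N = T"
    and x0: "\<forall>\<omega>\<in>space M. X (t 0) \<omega> = x0" "0 \<le> x0" "x0 \<le> K" and "p > 0"
  shows "ennreal (p / (p + 1)) * (\<integral>\<^sup>+\<omega>. ennreal (min (prefix_max (\<lambda>k. X (t k) \<omega>) N) K powr (p + 1)) \<partial>M)
           + ennreal (x0 powr (p + 1) / (p + 1))
         \<le> (\<integral>\<^sup>+\<omega>. ennreal (X T \<omega> * running_max X T \<omega> powr p) \<partial>M)"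
proof -
  interpret prob_space M by fact
  define m where "m \<omega> = min (prefix_max (\<lambda>k. X (t k) \<omega>) N) K" for \<omega>
  have m: "0 \<le> m \<omega>" "m \<omega> \<le> running_max X T \<omega>" if "\<omega> \<in> space M" for \<omega>
    using prefix_max_nonneg[of "\<lambda>k. X (t k) \<omega>" N] prefix_max_le_running_max[of T X \<omega> N t]
      x0 X(2) t(2) that
    unfolding m_def by auto
  note doob = submartingale_on_sampled_doob[OF assms(1) sub t(1,2) x0 \<open>p > 0\<close>, of N,
      unfolded t(3), folded m_def]
  have "ennreal (p / (p + 1)) * (\<integral>\<^sup>+\<omega>. ennreal (m \<omega> powr (p + 1)) \<partial>M)
          + ennreal (x0 powr (p + 1) / (p + 1))
        = ennreal (p / (p + 1) * (\<integral>\<omega>. m \<omega> powr (p + 1) \<partial>M) + x0 powr (p + 1) / (p + 1))"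
    using doob(2) \<open>p > 0\<close>
    by (simp add: nn_integral_eq_integral integral_nonneg_AE ennreal_mult[symmetric])
  also have "\<dots> \<le> ennreal (\<integral>\<omega>. X T \<omega> * m \<omega> powr p \<partial>M)"
    using doob(3) by (rule ennreal_leI)
  also have "\<dots> = (\<integral>\<^sup>+\<omega>. ennreal (X T \<omega> * m \<omega> powr p) \<partial>M)"
    using doob(1) X(1) by (simp add: nn_integral_eq_integral)
  also have "\<dots> \<le> (\<integral>\<^sup>+\<omega>. ennreal (X T \<omega> * running_max X T \<omega> powr p) \<partial>M)"
    using m X(1) \<open>p > 0\<close>
    by (intro nn_integral_mono ennreal_leI mult_left_mono powr_mono2) auto
  finally show ?thesis unfolding m_def .
qed

theorem mainTheorem3:
  fixes M :: "'a measure" and F :: "real \<Rightarrow> 'a measure"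
    and X Q :: "real \<Rightarrow> 'a \<Rightarrow> real" and T p x0 :: real
  assumes "prob_space M"
    and "T > 0"
    and "submartingale_on M T F X"
    and "\<forall>t\<in>{0..T}. \<forall>\<omega>\<in>space M. X t \<omega> \<ge> 0"
    and "\<forall>\<omega>\<in>space M. continuous_on {0..T} (\<lambda>t. X t \<omega>)"
    and "\<forall>\<omega>\<in>space M. X 0 \<omega> = x0"
    and "p > 0"
    and "quadratic_variation_on M T X Q"
    and "(\<integral>\<^sup>+ \<omega>. stieltjes_nn_integral T (\<lambda>t. Q t \<omega>)
            (\<lambda>t. running_max X t \<omega> powr (2 * p)) \<partial>M) < \<infinity>"
  shows "(\<integral>\<^sup>+ \<omega>. ennreal (X T \<omega> * running_max X T \<omega> powr p) \<partial>M)
         \<ge> ennreal (p / (p + 1)) * (\<integral>\<^sup>+ \<omega>. ennreal (running_max X T \<omega> powr (p + 1)) \<partial>M)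
           + ennreal (x0 powr (p + 1) / (p + 1))"
proof -
  interpret prob_space M by fact
  have sub: "submartingale_on M T F X" and "0 < T" "0 < p" by fact+
  have "0 \<le> x0" using assms(2,4,6) not_empty by fastforce
  have grid: "grid T (Suc n) k \<in> {0..T}" if "k \<le> Suc n" for n k
    using \<open>0 < T\<close> that by (intro grid_in_interval) auto
  define m where "m n \<omega> = min (prefix_max (\<lambda>k. X (grid T (Suc n) k) \<omega>) (Suc n)) (x0 + real n)" for n \<omega>
  have bound: "ennreal (p / (p + 1)) * (\<integral>\<^sup>+\<omega>. ennreal (m n \<omega> powr (p + 1)) \<partial>M)
      + ennreal (x0 powr (p + 1) / (p + 1)) \<le> (\<integral>\<^sup>+\<omega>. ennreal (X T \<omega> * running_max X T \<omega> powr p) \<partial>M)" for n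
    unfolding m_def using assms \<open>0 \<le> x0\<close> grid
    by (intro submartingale_on_sampled_doob_nn_integral) (auto simp: mono_grid)
  have "(\<lambda>\<omega>. prefix_max (\<lambda>k. X (grid T (Suc n) k) \<omega>) (Suc n)) \<in> borel_measurable M" for n
    using grid by (intro prefix_max_measurable submartingale_on_measurable[OF sub]) auto
  then have meas: "(\<lambda>\<omega>. ennreal (m n \<omega> powr (p + 1))) \<in> borel_measurable M" for n
    unfolding m_def by measurable
  have "(\<lambda>n. m n \<omega>) \<longlonglongrightarrow> running_max X T \<omega>" if "\<omega> \<in> space M" for \<omega>
    unfolding m_def using assms(5) that \<open>0 < T\<close> by (intro truncated_grid_max_tendsto_running_max) auto
  moreover have "0 \<le> m n \<omega>" if "\<omega> \<in> space M" for n \<omega>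
    using prefix_max_nonneg[of "\<lambda>k. X (grid T (Suc n) k) \<omega>" "Suc n"] assms(6) that \<open>0 \<le> x0\<close>
    unfolding m_def by (simp del: prefix_max.simps)
  ultimately have "(\<lambda>n. ennreal (m n \<omega> powr (p + 1))) \<longlonglongrightarrow> ennreal (running_max X T \<omega> powr (p + 1))"
    if "\<omega> \<in> space M" for \<omega>
    using that \<open>0 < p\<close> by (intro tendsto_ennrealI tendsto_powr') auto
  then show ?thesis
    by (rule nn_integral_affine_le_of_tendsto[OF meas _ ennreal_less_top bound])
qed

end
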